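(* Let $\pi$ be a topological group, $k$ a finite field and $F$ a field. For $i=1,\dots,N$, let $\rho_i:\pi\to\mathrm{GL}(V_i)$ be a finite-dimensional representation over $k$ with finite monodromy group $G_i=\rho_i(\pi)\le\mathrm{GL}(V_i)$, and let $\eta_i:G_i\to\mathrm{GL}(W_i)$ be a nontrivial representation over $F$. Let $\rho=\bigoplus_{i=1}^N(\eta_i\circ\rho_i):\pi\to\prod_{i=1}^N\mathrm{GL}(W_i)$ and $G=\rho(\pi)$. Assume: (1) each $G_i$ is quasisimple, i.e. $G_i$ is perfect and $G_i'=G_i/Z(G_i)$ is simple; (2) for every $i\ne j$, the pair $(G_l'\to\mathrm{PGL}(V_l))_{l=i,j}$ is Goursat-adapted; (3) for every $i\neq j$ there is no isomorphism $\rho_i\cong\chi\otimes\sigma(\rho_j)$ or $\rho_i\cong\chi\otimes D(\sigma(\rho_j))$ with $\chi$ a one-dimensional representation of $\pi$ over $k$ and $\sigma\in\mathrm{Aut}(k)$. Then $G=\prod_{i=1}^N(G_i/\ker\eta_i)$ (i.e. $G$ is as large as possible inside $\prod_i\eta_i(G_i)$).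
   Context: A pair $(G_i\to\mathrm{PGL}(V_i))_{i=1,2}$ of faithful representations over a finite field $k$ is Goursat-adapted if every isomorphism $G_1\cong G_2$ is of the form $X\mapsto A\sigma(X)A^{-1}$ for an isomorphism $A:V_1\to V_2$, or $X\mapsto A\sigma(X)^{-t}A^{-1}$ for an isomorphism $A:V_1^*\to V_2$, with $\sigma\in\mathrm{Aut}(k)$ acting on matrix entries. $G_l'$ is regarded in $\mathrm{PGL}(V_l)$ via the natural map. $\sigma(\rho_j)=\sigma\circ\rho_j$, and $D(\cdot)$ denotes the dual (contragredient) representation. *)

theory Defs
  imports "HOL-Analysis.Product_Topology" "HOL-Algebra.Algebra" "Jordan_Normal_Form.Matrix"
begin

definition topological_group :: "('p, 'b) monoid_scheme \<Rightarrow> 'p topology \<Rightarrow> bool" where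
  "topological_group P T \<longleftrightarrow> group P \<and> topspace T = carrier P
     \<and> continuous_map (prod_topology T T) T (\<lambda>(x, y). x \<otimes>\<^bsub>P\<^esub> y)
     \<and> continuous_map T T (\<lambda>x. inv\<^bsub>P\<^esub> x)"

definition mat_grp :: "nat \<Rightarrow> 'a::field mat set \<Rightarrow> 'a mat monoid" where
  "mat_grp n S = \<lparr>carrier = S, monoid.mult = (*), one = 1\<^sub>m n\<rparr>"

definition GL :: "nat \<Rightarrow> 'a::field mat monoid" where
  "GL n = mat_grp n {A \<in> carrier_mat n n. invertible_mat A}"

text \<open>A finite-dimensional continuous representation of the topological group (P,T) on k^n.
  (Target GL_n(k) carries the discrete topology, as k is finite.)\<close>

definition cont_rep :: "('p, 'b) monoid_scheme \<Rightarrow> 'p topology \<Rightarrow> nat \<Rightarrow> ('p \<Rightarrow> 'a::field mat) \<Rightarrow> bool" where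
  "cont_rep P T n r \<longleftrightarrow> r \<in> hom P (GL n) \<and> continuous_map T (discrete_topology UNIV) r"

text \<open>One-dimensional representations (characters) P -> GL_1(k) = k^*.\<close>

definition cont_char :: "('p, 'b) monoid_scheme \<Rightarrow> 'p topology \<Rightarrow> ('p \<Rightarrow> 'a::field) \<Rightarrow> bool" where
  "cont_char P T c \<longleftrightarrow> (\<forall>g\<in>carrier P. c g \<noteq> 0)
     \<and> (\<forall>g\<in>carrier P. \<forall>h\<in>carrier P. c (g \<otimes>\<^bsub>P\<^esub> h) = c g * c h)
     \<and> continuous_map T (discrete_topology UNIV) c"

definition field_aut :: "('a::field \<Rightarrow> 'a) \<Rightarrow> bool" where
  "field_aut s \<longleftrightarrow> bij s \<and> (\<forall>x y. s (x + y) = s x + s y) \<and> (\<forall>x y. s (x * y) = s x * s y)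
     \<and> s 1 = 1"

definition group_center :: "('a, 'b) monoid_scheme \<Rightarrow> 'a set" where
  "group_center G = {z \<in> carrier G. \<forall>x\<in>carrier G. z \<otimes>\<^bsub>G\<^esub> x = x \<otimes>\<^bsub>G\<^esub> z}"

definition quasisimple :: "('a, 'b) monoid_scheme \<Rightarrow> bool" where
  "quasisimple G \<longleftrightarrow> group G \<and> derived G (carrier G) = carrier G
     \<and> simple_group (G Mod group_center G)"

text \<open>For a finite subgroup S of GL_n(k), the natural map S/Z(S) -> PGL_n(k) is a faithful
  representation iff Z(S) consists exactly of the scalar matrices in S.\<close>

definition proj_faithful :: "nat \<Rightarrow> 'a::field mat set \<Rightarrow> bool" where
  "proj_faithful n S \<longleftrightarrow>
     (\<forall>Y\<in>S. (Y \<in> group_center (mat_grp n S)) \<longleftrightarrow> (\<exists>c. Y = smult_mat c (one_mat n)))"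

text \<open>The pair (S1/Z(S1) -> PGL(k^n1), S2/Z(S2) -> PGL(k^n2)) is Goursat-adapted: both are
  faithful, and every group isomorphism S1/Z(S1) -> S2/Z(S2) is induced (in PGL) by
  X |-> A s(X) A^-1 with A : k^n1 -> k^n2 linear iso, or by X |-> A s(X)^-t A^-1 with
  A : (k^n1)^* -> k^n2 linear iso, s a field automorphism acting entrywise.
  Equality in PGL means equality up to a nonzero scalar.\<close>

definition goursat_adapted :: "nat \<Rightarrow> 'a::field mat set \<Rightarrow> nat \<Rightarrow> 'a mat set \<Rightarrow> bool" where
  "goursat_adapted n1 S1 n2 S2 \<longleftrightarrow>
     proj_faithful n1 S1 \<and> proj_faithful n2 S2 \<and>
     (\<forall>\<phi>. \<phi> \<in> iso (mat_grp n1 S1 Mod group_center (mat_grp n1 S1))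
                   (mat_grp n2 S2 Mod group_center (mat_grp n2 S2)) \<longrightarrow>
        (\<exists>s A. field_aut s \<and> n1 = n2 \<and> A \<in> carrier (GL n2) \<and>
           ((\<forall>M\<in>S1. \<exists>Y\<in>S2. \<exists>c. c \<noteq> 0 \<and>
               \<phi> (group_center (mat_grp n1 S1) #>\<^bsub>mat_grp n1 S1\<^esub> M)
                 = group_center (mat_grp n2 S2) #>\<^bsub>mat_grp n2 S2\<^esub> Y
             \<and> Y = c \<cdot>\<^sub>m (A * map_mat s M * inv\<^bsub>GL n2\<^esub> A))
           \<or>
            (\<forall>M\<in>S1. \<exists>Y\<in>S2. \<exists>c. c \<noteq> 0 \<and>
               \<phi> (group_center (mat_grp n1 S1) #>\<^bsub>mat_grp n1 S1\<^esub> M)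
                 = group_center (mat_grp n2 S2) #>\<^bsub>mat_grp n2 S2\<^esub> Y
             \<and> Y = c \<cdot>\<^sub>m (A * transpose_mat (inv\<^bsub>GL n1\<^esub> (map_mat s M)) * inv\<^bsub>GL n2\<^esub> A)))))"

end

theory Submission
  imports Defs
begin

text \<open>Write \<open>f\<^sub>i = \<eta>\<^sub>i \<circ> \<rho>\<^sub>i\<close>. Each image \<open>f\<^sub>i(\<pi>) = \<eta>\<^sub>i(G\<^sub>i)\<close> is perfect, being a quotient
  of the perfect group \<open>G\<^sub>i\<close>. For homomorphisms with perfect images, joint surjectivity follows
  from pairwise joint surjectivity, i.e. from \<open>f\<^sub>i(ker f\<^sub>j) = f\<^sub>i(\<pi>)\<close> for \<open>i \<noteq> j\<close>: by induction
  on the number of kernels intersected, using that \<open>[K\<^sub>1, K\<^sub>2] \<subseteq> K\<^sub>1 \<inter> K\<^sub>2\<close> for normal subgroups.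
  If the pairwise condition failed for \<open>i \<noteq> j\<close>, quasisimplicity would force \<open>\<rho>\<^sub>i(ker f\<^sub>j)\<close> and
  \<open>\<rho>\<^sub>j(ker f\<^sub>i)\<close> to be central, so that \<open>\<rho>\<^sub>i\<close> and \<open>\<rho>\<^sub>j\<close> induce an isomorphism
  \<open>G\<^sub>i/Z(G\<^sub>i) \<cong> G\<^sub>j/Z(G\<^sub>j)\<close> compatible with \<open>\<pi>\<close> (Goursat). Goursat-adaptedness realises it as a
  semilinear conjugation, possibly followed by the contragredient, up to scalars; these scalars
  form a continuous character \<open>\<chi>\<close>, so \<open>\<rho>\<^sub>j \<cong> \<chi> \<otimes> \<sigma>(\<rho>\<^sub>i)\<close> or \<open>\<chi> \<otimes> D(\<sigma>(\<rho>\<^sub>i))\<close>, which is excluded.\<close>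

section \<open>Centres and quasisimple groups\<close>

lemma (in group) group_center_subgroup: "subgroup (group_center G) G"
proof (rule subgroupI)
  show "group_center G \<subseteq> carrier G" "group_center G \<noteq> {}"
    by (auto simp: group_center_def)
next
  fix a assume "a \<in> group_center G"
  then have a: "a \<in> carrier G" "\<And>x. x \<in> carrier G \<Longrightarrow> a \<otimes> x = x \<otimes> a"
    by (auto simp: group_center_def)
  have "inv a \<otimes> x = x \<otimes> inv a" if x: "x \<in> carrier G" for x
  proof -
    have "inv a \<otimes> x = inv a \<otimes> (x \<otimes> a) \<otimes> inv a" using a x by (simp add: m_assoc r_inv)
    also have "\<dots> = inv a \<otimes> (a \<otimes> x) \<otimes> inv a" by (simp add: a(2)[OF x])
    also have "\<dots> = x \<otimes> inv a" using a(1) x by (simp add: m_assoc[symmetric])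
    finally show ?thesis .
  qed
  then show "inv a \<in> group_center G" using a by (simp add: group_center_def)
next
  fix a b assume "a \<in> group_center G" "b \<in> group_center G"
  then have ab: "a \<in> carrier G" "b \<in> carrier G"
    and comm: "\<And>x. x \<in> carrier G \<Longrightarrow> a \<otimes> x = x \<otimes> a" "\<And>x. x \<in> carrier G \<Longrightarrow> b \<otimes> x = x \<otimes> b"
    by (auto simp: group_center_def)
  have "a \<otimes> b \<otimes> x = x \<otimes> (a \<otimes> b)" if x: "x \<in> carrier G" for x
  proof -
    have "a \<otimes> b \<otimes> x = a \<otimes> (x \<otimes> b)" using ab x by (simp add: m_assoc comm(2)[OF x])
    also have "\<dots> = x \<otimes> (a \<otimes> b)" using ab x by (simp add: m_assoc[symmetric] comm(1)[OF x])
    finally show ?thesis .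
  qed
  then show "a \<otimes> b \<in> group_center G" using ab by (simp add: group_center_def)
qed

lemma (in group) group_center_normal: "group_center G \<lhd> G"
proof (rule normal_invI[OF group_center_subgroup])
  fix x h assume x: "x \<in> carrier G" and h: "h \<in> group_center G"
  then have "x \<otimes> h = h \<otimes> x" "h \<in> carrier G" by (auto simp: group_center_def)
  then have "x \<otimes> h \<otimes> inv x = h" using x by (simp add: m_assoc)
  then show "x \<otimes> h \<otimes> inv x \<in> group_center G" using h by simp
qed

lemma (in group) commutator_center_left:
  assumes "z \<in> group_center G" and "y \<in> carrier G"
  shows "z \<otimes> y \<otimes> inv z \<otimes> inv y = \<one>"
proof -
  have "z \<in> carrier G" and "z \<otimes> y = y \<otimes> z"
    using assms by (auto simp: group_center_def)
  then show ?thesis using assms(2) by (simp add: m_assoc)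
qed

lemma (in group) commutator_center_mult_left:
  assumes z: "z \<in> group_center G" and n: "n \<in> carrier G" and y: "y \<in> carrier G"
  shows "(z \<otimes> n) \<otimes> y \<otimes> inv (z \<otimes> n) \<otimes> inv y = n \<otimes> y \<otimes> inv n \<otimes> inv y"
proof -
  have zc: "z \<in> carrier G" and zcomm: "z \<otimes> (n \<otimes> y \<otimes> inv n) = (n \<otimes> y \<otimes> inv n) \<otimes> z"
    using z n y by (auto simp: group_center_def)
  have "(z \<otimes> n) \<otimes> y \<otimes> inv (z \<otimes> n) = z \<otimes> (n \<otimes> y \<otimes> inv n) \<otimes> inv z"
    using zc n y by (simp add: inv_mult_group m_assoc)
  also have "\<dots> = n \<otimes> y \<otimes> inv n"
    using zcomm zc n y by (simp add: m_assoc)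
  finally show ?thesis by simp
qed

lemma (in group) perfect_subgroup_eq_carrier:
  assumes "derived G (carrier G) = carrier G" and "subgroup S G"
    and "derived_set G (carrier G) \<subseteq> S"
  shows "S = carrier G"
  using generate_subgroup_incl[OF assms(3,2)] assms(1,2) subgroup.subset
  unfolding derived_def by blast

lemma (in group) quasisimple_center_neq_carrier:
  assumes "quasisimple G"
  shows "group_center G \<noteq> carrier G"
  using assms self_factor_not_simple by (auto simp: quasisimple_def)

lemma (in normal) kernel_rcos_Mod: "kernel G (G Mod H) (\<lambda>a. H #> a) = H"
  using coset_join1[OF _ _ is_subgroup] coset_join2[OF _ is_subgroup] subset
  by (auto simp: kernel_def)

lemma (in group) center_quotient_hom:
  "group_hom G (G Mod group_center G) (\<lambda>a. group_center G #> a)"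
proof -
  interpret Z: normal "group_center G" G by (rule group_center_normal)
  show ?thesis
    by (simp add: group_hom_def group_hom_axioms_def is_group Z.factorgroup_is_group Z.r_coset_hom_Mod)
qed

lemma (in group) quasisimple_normal_central_or_carrier:
  assumes qs: "quasisimple G" and N: "N \<lhd> G"
  shows "N \<subseteq> group_center G \<or> N = carrier G"
proof -
  let ?Z = "group_center G" and ?q = "\<lambda>a. group_center G #> a"
  interpret Z: normal ?Z G by (rule group_center_normal)
  interpret N: normal N G by (rule N)
  have q: "group_hom G (G Mod ?Z) ?q" by (rule center_quotient_hom)
  have "simple_group (G Mod ?Z)" using qs by (simp add: quasisimple_def)
  moreover have "?q ` N \<lhd> G Mod ?Z"
    by (rule N.surj_hom_normal_subgroup[OF q]) (simp add: carrier_FactGroup)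
  ultimately have "?q ` N = carrier (G Mod ?Z) \<or> ?q ` N = {\<one>\<^bsub>G Mod ?Z\<^esub>}"
    by (rule simple_group.no_real_normal_subgroup)
  then have "?q ` N = carrier (G Mod ?Z) \<or> ?q ` N = {?Z}" by simp
  then show ?thesis
  proof
    assume full: "?q ` N = carrier (G Mod ?Z)"
    have "derived_set G (carrier G) \<subseteq> N"
    proof (safe)
      fix x y assume x: "x \<in> carrier G" and y: "y \<in> carrier G"
      have "?q x \<in> ?q ` N" using full x by (simp add: carrier_FactGroup)
      then obtain n where n: "n \<in> N" "?Z #> x = ?Z #> n" by blast
      have "x \<in> ?Z #> n" using rcos_self[OF x Z.is_subgroup] n(2) by simp
      then obtain z where z: "z \<in> ?Z" "x = z \<otimes> n" unfolding r_coset_def by blast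
      have nc: "n \<in> carrier G" using n N.subset by blast
      have "x \<otimes> y \<otimes> inv x \<otimes> inv y = n \<otimes> (y \<otimes> inv n \<otimes> inv y)"
        using commutator_center_mult_left[OF z(1) nc y] z(2) nc y by (simp add: m_assoc)
      moreover have "y \<otimes> inv n \<otimes> inv y \<in> N"
        using N.inv_op_closed2[OF y N.m_inv_closed[OF n(1)]] .
      ultimately show "x \<otimes> y \<otimes> inv x \<otimes> inv y \<in> N" using n by simp
    qed
    then show ?thesis
      using perfect_subgroup_eq_carrier qs N.is_subgroup by (simp add: quasisimple_def)
  next
    assume "?q ` N = {?Z}"
    then have "?Z #> n = ?Z" if "n \<in> N" for n using that by blast
    then show ?thesis using coset_join1[OF _ _ Z.is_subgroup] N.subset by blast
  qed
qed

lemma quasisimple_image_perfect: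
  assumes "group_hom G H e" and "quasisimple G"
  shows "derived H (e ` carrier G) = e ` carrier G"
  using group_hom.derived_img[OF assms(1) subset_refl] assms(2) by (simp add: quasisimple_def)

lemma quasisimple_image_central:
  assumes h: "group_hom P G r" and s: "r ` carrier P = carrier G" and q: "quasisimple G"
    and K: "K \<lhd> P" and ne: "e ` r ` K \<noteq> e ` r ` carrier P"
  shows "r ` K \<subseteq> group_center G"
proof -
  have G: "group G" using q by (simp add: quasisimple_def)
  have "r ` K \<lhd> G" by (rule normal.surj_hom_normal_subgroup[OF K h s])
  then have "r ` K \<subseteq> group_center G \<or> r ` K = carrier G"
    by (rule group.quasisimple_normal_central_or_carrier[OF G q])
  then show ?thesis using ne s by auto
qed

section \<open>Goursat's lemma for quasisimple groups\<close>

lemma group_hom_compose: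
  assumes "group_hom P G r" and "group_hom G H e"
  shows "group_hom P H (\<lambda>x. e (r x))"
  using hom_compose[of r P G e H] assms
  by (simp add: group_hom_def group_hom_axioms_def o_def)

lemma kernel_compose:
  assumes "r \<in> hom P G"
  shows "kernel P H (\<lambda>x. e (r x)) = {x \<in> carrier P. r x \<in> kernel G H e}"
  using assms by (auto simp: kernel_def hom_def)

lemma (in group_hom) hom_eq_iff_kernel:
  assumes x: "x \<in> carrier G" and y: "y \<in> carrier G"
  shows "h x = h y \<longleftrightarrow> x \<otimes> inv y \<in> kernel G H h"
proof -
  have hx: "h x \<in> carrier H" and hy: "h y \<in> carrier H" using x y by simp_all
  have "h x \<otimes>\<^bsub>H\<^esub> inv\<^bsub>H\<^esub> h y = \<one>\<^bsub>H\<^esub> \<longleftrightarrow> h x = h y"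
    by (metis H.inv_closed H.inv_equality H.inv_inv H.r_inv hx hy)
  then show ?thesis using x y by (simp add: kernel_def)
qed

lemma (in group_hom) commutator_in_kernel_of_center:
  assumes u: "u \<in> carrier G" and v: "v \<in> carrier G" and hu: "h u \<in> group_center H"
  shows "u \<otimes> v \<otimes> inv u \<otimes> inv v \<in> kernel G H h"
proof -
  have "h (u \<otimes> v \<otimes> inv u \<otimes> inv v) = h u \<otimes>\<^bsub>H\<^esub> h v \<otimes>\<^bsub>H\<^esub> inv\<^bsub>H\<^esub> h u \<otimes>\<^bsub>H\<^esub> inv\<^bsub>H\<^esub> h v"
    using u v by simp
  also have "\<dots> = \<one>\<^bsub>H\<^esub>" using H.commutator_center_left hu v by simp
  finally show ?thesis using u v by (simp add: kernel_def)
qed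

lemma quasisimple_center_transfer:
  assumes h1: "group_hom P G1 r1" and h2: "group_hom P G2 r2"
    and s2: "r2 ` carrier P = carrier G2" and q2: "quasisimple G2"
    and c: "r2 ` kernel P G1 r1 \<subseteq> group_center G2"
    and x: "x \<in> carrier P" and r1x: "r1 x \<in> group_center G1"
  shows "r2 x \<in> group_center G2"
proof -
  define Y where "Y = {y \<in> carrier P. r1 y \<in> group_center G1}"
  interpret r1: group_hom P G1 r1 by (rule h1)
  interpret r2: group_hom P G2 r2 by (rule h2)
  have "Y = kernel P (G1 Mod group_center G1) (\<lambda>y. group_center G1 #>\<^bsub>G1\<^esub> r1 y)"
    unfolding Y_def kernel_compose[OF r1.homh]
    using normal.kernel_rcos_Mod[OF r1.H.group_center_normal] by simp
  then have "Y \<lhd> P"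
    using group_hom.normal_kernel[OF group_hom_compose[OF h1 r1.H.center_quotient_hom]] by simp
  then have "r2 ` Y \<lhd> G2" by (rule normal.surj_hom_normal_subgroup[OF _ h2 s2])
  then have "r2 ` Y \<subseteq> group_center G2 \<or> r2 ` Y = carrier G2"
    by (rule r2.H.quasisimple_normal_central_or_carrier[OF q2])
  moreover have "r2 ` Y \<noteq> carrier G2"
  proof
    assume full: "r2 ` Y = carrier G2"
    have "derived_set G2 (carrier G2) \<subseteq> group_center G2"
    proof (safe)
      fix a b assume a: "a \<in> carrier G2" and b: "b \<in> carrier G2"
      obtain u where u: "u \<in> carrier P" "r1 u \<in> group_center G1" "a = r2 u"
        using full a unfolding Y_def by blast
      obtain v where v: "v \<in> carrier P" "b = r2 v" using s2 b by blast
      let ?c = "u \<otimes>\<^bsub>P\<^esub> v \<otimes>\<^bsub>P\<^esub> inv\<^bsub>P\<^esub> u \<otimes>\<^bsub>P\<^esub> inv\<^bsub>P\<^esub> v"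
      have "r2 ?c \<in> group_center G2"
        using r1.commutator_in_kernel_of_center[OF u(1) v(1) u(2)] c by blast
      moreover have "r2 ?c = a \<otimes>\<^bsub>G2\<^esub> b \<otimes>\<^bsub>G2\<^esub> inv\<^bsub>G2\<^esub> a \<otimes>\<^bsub>G2\<^esub> inv\<^bsub>G2\<^esub> b"
        using u v by simp
      ultimately show "a \<otimes>\<^bsub>G2\<^esub> b \<otimes>\<^bsub>G2\<^esub> inv\<^bsub>G2\<^esub> a \<otimes>\<^bsub>G2\<^esub> inv\<^bsub>G2\<^esub> b \<in> group_center G2"
        by simp
    qed
    then have "group_center G2 = carrier G2"
      using r2.H.perfect_subgroup_eq_carrier r2.H.group_center_subgroup q2
      by (simp add: quasisimple_def)
    then show False using r2.H.quasisimple_center_neq_carrier[OF q2] by simp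
  qed
  ultimately show ?thesis using x r1x unfolding Y_def by blast
qed

lemma iso_of_equal_kernels:
  assumes h1: "group_hom P Q1 q1" and h2: "group_hom P Q2 q2"
    and s1: "q1 ` carrier P = carrier Q1" and s2: "q2 ` carrier P = carrier Q2"
    and K: "kernel P Q1 q1 = kernel P Q2 q2"
  shows "\<exists>\<phi>. \<phi> \<in> iso Q1 Q2 \<and> (\<forall>x\<in>carrier P. \<phi> (q1 x) = q2 x)"
proof -
  interpret q1: group_hom P Q1 q1 by (rule h1)
  interpret q2: group_hom P Q2 q2 by (rule h2)
  have fibres: "q1 x = q1 y \<longleftrightarrow> q2 x = q2 y" if "x \<in> carrier P" "y \<in> carrier P" for x y
    by (simp only: q1.hom_eq_iff_kernel[OF that] q2.hom_eq_iff_kernel[OF that] K)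
  define \<phi> where "\<phi> a = q2 (SOME x. x \<in> carrier P \<and> q1 x = a)" for a
  have \<phi>: "\<phi> (q1 x) = q2 x" if x: "x \<in> carrier P" for x
  proof -
    define y where "y = (SOME y. y \<in> carrier P \<and> q1 y = q1 x)"
    have "\<exists>y. y \<in> carrier P \<and> q1 y = q1 x" using x by blast
    then have "y \<in> carrier P \<and> q1 y = q1 x" unfolding y_def by (rule someI_ex)
    then have "q2 y = q2 x" using fibres[of y x] x by blast
    then show ?thesis unfolding \<phi>_def y_def[symmetric] .
  qed
  have "\<phi> \<in> hom Q1 Q2"
  proof (rule homI)
    fix a assume "a \<in> carrier Q1"
    then obtain x where "x \<in> carrier P" "a = q1 x" using s1 by blast
    then show "\<phi> a \<in> carrier Q2" using \<phi> by simp
  next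
    fix a b assume "a \<in> carrier Q1" "b \<in> carrier Q1"
    then obtain x y where x: "x \<in> carrier P" "a = q1 x" and y: "y \<in> carrier P" "b = q1 y"
      using s1 by blast
    have "\<phi> (a \<otimes>\<^bsub>Q1\<^esub> b) = \<phi> (q1 (x \<otimes>\<^bsub>P\<^esub> y))" using x y by simp
    also have "\<dots> = q2 (x \<otimes>\<^bsub>P\<^esub> y)" by (rule \<phi>) (use x y in simp)
    also have "\<dots> = \<phi> a \<otimes>\<^bsub>Q2\<^esub> \<phi> b" using x y \<phi> by simp
    finally show "\<phi> (a \<otimes>\<^bsub>Q1\<^esub> b) = \<phi> a \<otimes>\<^bsub>Q2\<^esub> \<phi> b" .
  qed
  moreover have "bij_betw \<phi> (carrier Q1) (carrier Q2)"
  proof (rule bij_betw_imageI)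
    show "inj_on \<phi> (carrier Q1)"
    proof (rule inj_onI)
      fix a b assume "a \<in> carrier Q1" "b \<in> carrier Q1" and eq: "\<phi> a = \<phi> b"
      then obtain x y where x: "x \<in> carrier P" "a = q1 x" and y: "y \<in> carrier P" "b = q1 y"
        using s1 by blast
      then show "a = b" using eq \<phi> fibres by simp
    qed
    have "\<phi> ` carrier Q1 = (\<lambda>x. \<phi> (q1 x)) ` carrier P" by (simp add: image_image flip: s1)
    then show "\<phi> ` carrier Q1 = carrier Q2" using \<phi> s2 by simp
  qed
  ultimately show ?thesis using \<phi> by (auto simp: iso_def)
qed

lemma quasisimple_goursat:
  assumes h1: "group_hom P G1 r1" and h2: "group_hom P G2 r2"
    and s1: "r1 ` carrier P = carrier G1" and s2: "r2 ` carrier P = carrier G2"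
    and q1: "quasisimple G1" and q2: "quasisimple G2"
    and c1: "r2 ` kernel P G1 r1 \<subseteq> group_center G2"
    and c2: "r1 ` kernel P G2 r2 \<subseteq> group_center G1"
  shows "\<exists>\<phi>. \<phi> \<in> iso (G1 Mod group_center G1) (G2 Mod group_center G2) \<and>
     (\<forall>x\<in>carrier P. \<phi> (group_center G1 #>\<^bsub>G1\<^esub> r1 x) = group_center G2 #>\<^bsub>G2\<^esub> r2 x)"
proof (rule iso_of_equal_kernels)
  interpret r1: group_hom P G1 r1 by (rule h1)
  interpret r2: group_hom P G2 r2 by (rule h2)
  show "group_hom P (G1 Mod group_center G1) (\<lambda>x. group_center G1 #>\<^bsub>G1\<^esub> r1 x)"
    by (rule group_hom_compose[OF h1 r1.H.center_quotient_hom])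
  show "group_hom P (G2 Mod group_center G2) (\<lambda>x. group_center G2 #>\<^bsub>G2\<^esub> r2 x)"
    by (rule group_hom_compose[OF h2 r2.H.center_quotient_hom])
  show "(\<lambda>x. group_center G1 #>\<^bsub>G1\<^esub> r1 x) ` carrier P = carrier (G1 Mod group_center G1)"
    by (simp add: carrier_FactGroup flip: s1 image_image)
  show "(\<lambda>x. group_center G2 #>\<^bsub>G2\<^esub> r2 x) ` carrier P = carrier (G2 Mod group_center G2)"
    by (simp add: carrier_FactGroup flip: s2 image_image)
  show "kernel P (G1 Mod group_center G1) (\<lambda>x. group_center G1 #>\<^bsub>G1\<^esub> r1 x)
      = kernel P (G2 Mod group_center G2) (\<lambda>x. group_center G2 #>\<^bsub>G2\<^esub> r2 x)"
    unfolding kernel_compose[OF r1.homh] kernel_compose[OF r2.homh]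
      normal.kernel_rcos_Mod[OF r1.H.group_center_normal] normal.kernel_rcos_Mod[OF r2.H.group_center_normal]
    using quasisimple_center_transfer[OF h1 h2 s2 q2 c1] quasisimple_center_transfer[OF h2 h1 s1 q1 c2]
    by blast
qed

lemma image_kernel_eq_image_swap:
  assumes h1: "group_hom P H1 f1" and h2: "group_hom P H2 f2"
    and full: "f2 ` kernel P H1 f1 = f2 ` carrier P"
  shows "f1 ` kernel P H2 f2 = f1 ` carrier P"
proof
  interpret f1: group_hom P H1 f1 by (rule h1)
  interpret f2: group_hom P H2 f2 by (rule h2)
  show "f1 ` kernel P H2 f2 \<subseteq> f1 ` carrier P" by (auto simp: kernel_def)
  show "f1 ` carrier P \<subseteq> f1 ` kernel P H2 f2"
  proof
    fix a assume "a \<in> f1 ` carrier P"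
    then obtain x where x: "x \<in> carrier P" "a = f1 x" by blast
    obtain k where k: "k \<in> kernel P H1 f1" "f2 x = f2 k" using full x by (metis imageE imageI)
    have kc: "k \<in> carrier P" and f1k: "f1 k = \<one>\<^bsub>H1\<^esub>" using k by (auto simp: kernel_def)
    let ?y = "x \<otimes>\<^bsub>P\<^esub> inv\<^bsub>P\<^esub> k"
    have "f1 ?y = a" using x kc f1k by simp
    moreover have "?y \<in> kernel P H2 f2" using x kc k(2) by (simp add: kernel_def)
    ultimately show "a \<in> f1 ` kernel P H2 f2" by blast
  qed
qed

lemma quasisimple_goursat_of_image_kernel_neq:
  assumes h1: "group_hom P G1 r1" and h2: "group_hom P G2 r2"
    and s1: "r1 ` carrier P = carrier G1" and s2: "r2 ` carrier P = carrier G2"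
    and q1: "quasisimple G1" and q2: "quasisimple G2"
    and e1: "group_hom G1 H1 e1" and e2: "group_hom G2 H2 e2"
    and ne: "(\<lambda>x. e1 (r1 x)) ` kernel P H2 (\<lambda>x. e2 (r2 x)) \<noteq> (\<lambda>x. e1 (r1 x)) ` carrier P"
  shows "\<exists>\<phi>. \<phi> \<in> iso (G1 Mod group_center G1) (G2 Mod group_center G2) \<and>
     (\<forall>x\<in>carrier P. \<phi> (group_center G1 #>\<^bsub>G1\<^esub> r1 x) = group_center G2 #>\<^bsub>G2\<^esub> r2 x)"
proof (rule quasisimple_goursat[OF h1 h2 s1 s2 q1 q2])
  have f1: "group_hom P H1 (\<lambda>x. e1 (r1 x))" by (rule group_hom_compose[OF h1 e1])
  have f2: "group_hom P H2 (\<lambda>x. e2 (r2 x))" by (rule group_hom_compose[OF h2 e2])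
  have ne': "(\<lambda>x. e2 (r2 x)) ` kernel P H1 (\<lambda>x. e1 (r1 x)) \<noteq> (\<lambda>x. e2 (r2 x)) ` carrier P"
    using image_kernel_eq_image_swap[OF f1 f2] ne by blast
  have "r1 ` kernel P H2 (\<lambda>x. e2 (r2 x)) \<subseteq> group_center G1"
    by (rule quasisimple_image_central[OF h1 s1 q1 group_hom.normal_kernel[OF f2], of e1])
       (use ne in \<open>simp add: image_image\<close>)
  moreover have "r2 ` kernel P H1 (\<lambda>x. e1 (r1 x)) \<subseteq> group_center G2"
    by (rule quasisimple_image_central[OF h2 s2 q2 group_hom.normal_kernel[OF f1], of e2])
       (use ne' in \<open>simp add: image_image\<close>)
  moreover have "kernel P G1 r1 \<subseteq> kernel P H1 (\<lambda>x. e1 (r1 x))"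
    and "kernel P G2 r2 \<subseteq> kernel P H2 (\<lambda>x. e2 (r2 x))"
    using group_hom.hom_one[OF e1] group_hom.hom_one[OF e2] by (auto simp: kernel_def)
  ultimately show "r2 ` kernel P G1 r1 \<subseteq> group_center G2" "r1 ` kernel P G2 r2 \<subseteq> group_center G1"
    by blast+
qed

section \<open>Joint surjectivity onto perfect images\<close>

lemma perfect_image_normal_Int:
  assumes h: "group_hom P H f" and perfect: "derived H (f ` carrier P) = f ` carrier P"
    and K1: "K1 \<lhd> P" and K2: "K2 \<lhd> P"
    and full1: "f ` K1 = f ` carrier P" and full2: "f ` K2 = f ` carrier P"
  shows "f ` (K1 \<inter> K2) = f ` carrier P"
proof
  interpret f: group_hom P H f by (rule h)
  interpret K1: normal K1 P by (rule K1)
  interpret K2: normal K2 P by (rule K2)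
  show "f ` (K1 \<inter> K2) \<subseteq> f ` carrier P" using K1.subset by blast
  have "subgroup (K1 \<inter> K2) P"
    by (rule normal_imp_subgroup[OF f.G.normal_subgroup_intersect[OF K1 K2]])
  then have sub: "subgroup (f ` (K1 \<inter> K2)) H" by (rule f.subgroup_img_is_subgroup)
  have "derived_set H (f ` carrier P) \<subseteq> f ` (K1 \<inter> K2)"
  proof (safe)
    fix x y assume "x \<in> carrier P" "y \<in> carrier P"
    then have "f x \<in> f ` K1" and "f y \<in> f ` K2" using full1 full2 by blast+
    then obtain u v where u: "u \<in> K1" "f u = f x" and v: "v \<in> K2" "f v = f y"
      by (metis imageE)
    have uc: "u \<in> carrier P" and vc: "v \<in> carrier P" using u v K1.subset K2.subset by blast+
    let ?c = "u \<otimes>\<^bsub>P\<^esub> v \<otimes>\<^bsub>P\<^esub> inv\<^bsub>P\<^esub> u \<otimes>\<^bsub>P\<^esub> inv\<^bsub>P\<^esub> v"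
    have "u \<otimes>\<^bsub>P\<^esub> (v \<otimes>\<^bsub>P\<^esub> inv\<^bsub>P\<^esub> u \<otimes>\<^bsub>P\<^esub> inv\<^bsub>P\<^esub> v) \<in> K1"
      using K1.inv_op_closed2[OF vc K1.m_inv_closed[OF u(1)]] u(1) by simp
    then have "?c \<in> K1" using uc vc by (simp add: f.G.m_assoc)
    moreover have "?c \<in> K2"
      using K2.inv_op_closed2[OF uc v(1)] K2.m_inv_closed[OF v(1)] by simp
    moreover have "f ?c = f x \<otimes>\<^bsub>H\<^esub> f y \<otimes>\<^bsub>H\<^esub> inv\<^bsub>H\<^esub> f x \<otimes>\<^bsub>H\<^esub> inv\<^bsub>H\<^esub> f y"
      using uc vc u v by simp
    ultimately show "f x \<otimes>\<^bsub>H\<^esub> f y \<otimes>\<^bsub>H\<^esub> inv\<^bsub>H\<^esub> f x \<otimes>\<^bsub>H\<^esub> inv\<^bsub>H\<^esub> f y \<in> f ` (K1 \<inter> K2)"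
      by (metis IntI imageI)
  qed
  then have "derived H (f ` carrier P) \<subseteq> f ` (K1 \<inter> K2)"
    unfolding derived_def by (rule f.H.generate_subgroup_incl[OF _ sub])
  then show "f ` carrier P \<subseteq> f ` (K1 \<inter> K2)" by (simp only: perfect)
qed

lemma image_Int_kernels_eq_image:
  assumes P: "group P" and hom: "\<And>i. i \<in> I \<Longrightarrow> group_hom P (H i) (f i)"
    and perfect: "\<And>i. i \<in> I \<Longrightarrow> derived (H i) (f i ` carrier P) = f i ` carrier P"
    and pair: "\<And>i j. i \<in> I \<Longrightarrow> j \<in> I \<Longrightarrow> i \<noteq> j \<Longrightarrow> f i ` kernel P (H j) (f j) = f i ` carrier P"
    and j: "j \<in> I" and J: "finite J" "J \<subseteq> I - {j}"
  shows "carrier P \<inter> (\<Inter>i\<in>J. kernel P (H i) (f i)) \<lhd> P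
    \<and> f j ` (carrier P \<inter> (\<Inter>i\<in>J. kernel P (H i) (f i))) = f j ` carrier P"
  using J
proof (induction J rule: finite_induct)
  case empty
  show ?case using group.normal_self[OF P] by simp
next
  case (insert k J)
  have kI: "k \<in> I" "k \<noteq> j" using insert.prems by auto
  have Kk: "kernel P (H k) (f k) \<lhd> P" using hom[OF kI(1)] by (rule group_hom.normal_kernel)
  have split: "carrier P \<inter> (\<Inter>i\<in>insert k J. kernel P (H i) (f i))
      = (carrier P \<inter> (\<Inter>i\<in>J. kernel P (H i) (f i))) \<inter> kernel P (H k) (f k)" by auto
  have IH: "carrier P \<inter> (\<Inter>i\<in>J. kernel P (H i) (f i)) \<lhd> P"
    "f j ` (carrier P \<inter> (\<Inter>i\<in>J. kernel P (H i) (f i))) = f j ` carrier P"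
    using insert.IH insert.prems by auto
  have "f j ` kernel P (H k) (f k) = f j ` carrier P" using pair[OF j kI(1)] kI(2) by simp
  then show ?case unfolding split
    using group.normal_subgroup_intersect[OF P IH(1) Kk]
      perfect_image_normal_Int[OF hom[OF j] perfect[OF j] IH(1) Kk IH(2)] by simp
qed

lemma exists_coordinate_preimage:
  assumes P: "group P" and I: "finite I" and hom: "\<And>i. i \<in> I \<Longrightarrow> group_hom P (H i) (f i)"
    and perfect: "\<And>i. i \<in> I \<Longrightarrow> derived (H i) (f i ` carrier P) = f i ` carrier P"
    and pair: "\<And>i j. i \<in> I \<Longrightarrow> j \<in> I \<Longrightarrow> i \<noteq> j \<Longrightarrow> f i ` kernel P (H j) (f j) = f i ` carrier P"
    and k: "k \<in> I" and b: "b \<in> f k ` carrier P"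
  shows "\<exists>y\<in>carrier P. f k y = b \<and> (\<forall>i\<in>I - {k}. f i y = \<one>\<^bsub>H i\<^esub>)"
proof -
  have "f k ` (carrier P \<inter> (\<Inter>i\<in>I - {k}. kernel P (H i) (f i))) = f k ` carrier P"
    by (rule image_Int_kernels_eq_image[THEN conjunct2, OF P]) (use hom perfect pair k I in auto)
  then have "b \<in> f k ` (carrier P \<inter> (\<Inter>i\<in>I - {k}. kernel P (H i) (f i)))" using b by simp
  then show ?thesis by (auto simp: kernel_def)
qed

lemma exists_partial_joint_preimage:
  assumes P: "group P" and I: "finite I" and hom: "\<And>i. i \<in> I \<Longrightarrow> group_hom P (H i) (f i)"
    and perfect: "\<And>i. i \<in> I \<Longrightarrow> derived (H i) (f i ` carrier P) = f i ` carrier P"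
    and pair: "\<And>i j. i \<in> I \<Longrightarrow> j \<in> I \<Longrightarrow> i \<noteq> j \<Longrightarrow> f i ` kernel P (H j) (f j) = f i ` carrier P"
    and a: "\<And>i. i \<in> I \<Longrightarrow> a i \<in> f i ` carrier P" and J: "J \<subseteq> I"
  shows "\<exists>x\<in>carrier P. (\<forall>i\<in>J. f i x = a i) \<and> (\<forall>i\<in>I - J. f i x = \<one>\<^bsub>H i\<^esub>)"
  using finite_subset[OF J I] J
proof (induction J rule: finite_induct)
  case empty
  show ?case using hom P by (intro bexI[of _ "\<one>\<^bsub>P\<^esub>"]) (auto simp: group_hom.hom_one group.is_monoid)
next
  case (insert k J)
  obtain x where x: "x \<in> carrier P" "\<forall>i\<in>J. f i x = a i" "\<forall>i\<in>I - J. f i x = \<one>\<^bsub>H i\<^esub>"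
    using insert by auto
  have k: "k \<in> I" "k \<notin> J" using insert by auto
  obtain y where y: "y \<in> carrier P" "f k y = a k" "\<forall>i\<in>I - {k}. f i y = \<one>\<^bsub>H i\<^esub>"
    using exists_coordinate_preimage[of P I H f k "a k", OF P I hom perfect pair k(1) a[OF k(1)]]
    by blast
  have xy: "f i (x \<otimes>\<^bsub>P\<^esub> y) = (if i \<in> insert k J then a i else \<one>\<^bsub>H i\<^esub>)" if i: "i \<in> I" for i
  proof -
    interpret fi: group_hom P "H i" "f i" by (rule hom[OF i])
    have mult: "f i (x \<otimes>\<^bsub>P\<^esub> y) = f i x \<otimes>\<^bsub>H i\<^esub> f i y"
      and closed: "f i x \<in> carrier (H i)" "f i y \<in> carrier (H i)"
      using x(1) y(1) by simp_all
    show ?thesis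
    proof (cases "i = k")
      case True
      then have "f i x = \<one>\<^bsub>H i\<^esub>" "f i y = a i" "i \<in> insert k J"
        using x(3) y(2) i k(2) by auto
      then show ?thesis using mult closed by simp
    next
      case False
      then have "f i y = \<one>\<^bsub>H i\<^esub>" using y(3) i by auto
      then show ?thesis using mult closed x(2,3) i False by auto
    qed
  qed
  have "x \<otimes>\<^bsub>P\<^esub> y \<in> carrier P" using x(1) y(1) P by (simp add: group.is_monoid monoid.m_closed)
  then show ?case
    by (intro bexI[of _ "x \<otimes>\<^bsub>P\<^esub> y"] conjI ballI) (use xy insert.prems in auto)
qed

lemma joint_image_eq_PiE:
  assumes P: "group P" and I: "finite I"
    and hom: "\<And>i. i \<in> I \<Longrightarrow> group_hom P (H i) (f i)"
    and perfect: "\<And>i. i \<in> I \<Longrightarrow> derived (H i) (f i ` carrier P) = f i ` carrier P"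
    and pair: "\<And>i j. i \<in> I \<Longrightarrow> j \<in> I \<Longrightarrow> i \<noteq> j \<Longrightarrow> f i ` kernel P (H j) (f j) = f i ` carrier P"
  shows "(\<lambda>x. \<lambda>i\<in>I. f i x) ` carrier P = (\<Pi>\<^sub>E i\<in>I. f i ` carrier P)"
proof
  show "(\<lambda>x. \<lambda>i\<in>I. f i x) ` carrier P \<subseteq> (\<Pi>\<^sub>E i\<in>I. f i ` carrier P)" by auto
  show "(\<Pi>\<^sub>E i\<in>I. f i ` carrier P) \<subseteq> (\<lambda>x. \<lambda>i\<in>I. f i x) ` carrier P"
  proof
    fix a assume a: "a \<in> (\<Pi>\<^sub>E i\<in>I. f i ` carrier P)"
    then obtain x where x: "x \<in> carrier P" "\<forall>i\<in>I. f i x = a i"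
      using exists_partial_joint_preimage[of P I H f a I, OF P I hom perfect pair] by (auto simp: PiE_iff)
    then have "a = (\<lambda>i\<in>I. f i x)" using a by (auto simp: PiE_iff extensional_def)
    then show "a \<in> (\<lambda>x. \<lambda>i\<in>I. f i x) ` carrier P" using x(1) by blast
  qed
qed

section \<open>Matrix groups\<close>

lemma GL_carrier: "carrier (GL n) = {A \<in> carrier_mat n n. invertible_mat A}"
  by (simp add: GL_def mat_grp_def)

lemma GL_mult [simp]: "A \<otimes>\<^bsub>GL n\<^esub> B = A * B"
  by (simp add: GL_def mat_grp_def)

lemma GL_one [simp]: "\<one>\<^bsub>GL n\<^esub> = 1\<^sub>m n"
  by (simp add: GL_def mat_grp_def)

lemma mat_grp_mult [simp]: "A \<otimes>\<^bsub>mat_grp n S\<^esub> B = A * B"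
  by (simp add: mat_grp_def)

lemma mat_grp_carrier [simp]: "carrier (mat_grp n S) = S"
  by (simp add: mat_grp_def)

lemma inverts_mat_carrier:
  assumes "A \<in> carrier_mat n n" and "inverts_mat A B" and "inverts_mat B A"
  shows "B \<in> carrier_mat n n"
  using assms unfolding inverts_mat_def
  by (metis carrier_matD(1,2) carrier_mat_triv index_mult_mat(3) index_one_mat(3))

lemma GL_eq_units_of: "GL n = units_of (ring_mat TYPE('a::field) n b)"
proof -
  have "A \<in> Units (ring_mat TYPE('a) n b) \<longleftrightarrow> A \<in> carrier_mat n n \<and> invertible_mat A" for A
  proof
    assume "A \<in> Units (ring_mat TYPE('a) n b)"
    then obtain B where "A \<in> carrier_mat n n" "B \<in> carrier_mat n n" "B * A = 1\<^sub>m n" "A * B = 1\<^sub>m n"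
      by (auto simp: Units_def ring_mat_simps)
    then show "A \<in> carrier_mat n n \<and> invertible_mat A"
      by (auto simp: invertible_mat_def inverts_mat_def)
  next
    assume A: "A \<in> carrier_mat n n \<and> invertible_mat A"
    then obtain B where B: "inverts_mat A B" "inverts_mat B A" by (auto simp: invertible_mat_def)
    moreover have "B \<in> carrier_mat n n" using A B by (blast intro: inverts_mat_carrier)
    ultimately show "A \<in> Units (ring_mat TYPE('a) n b)"
      using A by (auto simp: Units_def ring_mat_simps inverts_mat_def)
  qed
  then show ?thesis by (auto simp: GL_def mat_grp_def units_of_def ring_mat_simps)
qed

lemma GL_group: "group (GL n :: 'a::field mat monoid)"
proof -
  interpret semiring "ring_mat TYPE('a) n ()" by (rule semiring_mat)
  show ?thesis unfolding GL_eq_units_of[where b = "()"] by (rule units_group)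
qed

lemma GL_inv [simp]:
  assumes "A \<in> carrier (GL n)"
  shows "A * inv\<^bsub>GL n\<^esub> A = 1\<^sub>m n" and "inv\<^bsub>GL n\<^esub> A * A = 1\<^sub>m n"
    and "inv\<^bsub>GL n\<^esub> A \<in> carrier_mat n n"
  using group.r_inv[OF GL_group assms] group.l_inv[OF GL_group assms]
    group.inv_closed[OF GL_group assms] by (simp_all add: GL_carrier)

lemma GL_neq_zero_mat:
  assumes "0 < n" and "A \<in> carrier (GL n)"
  shows "A \<noteq> 0\<^sub>m n n"
proof
  assume "A = 0\<^sub>m n n"
  then have "0\<^sub>m n n * inv\<^bsub>GL n\<^esub> A = 1\<^sub>m n" using GL_inv(1)[OF assms(2)] by simp
  then have "(0\<^sub>m n n :: 'a mat) $$ (0, 0) = (1\<^sub>m n :: 'a mat) $$ (0, 0)"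
    using GL_inv(3)[OF assms(2)] by simp
  then show False using assms(1) by simp
qed

lemma smult_mat_cancel:
  assumes "A \<in> carrier_mat nr nc" and "A \<noteq> 0\<^sub>m nr nc" and "c \<cdot>\<^sub>m A = d \<cdot>\<^sub>m A"
  shows "c = (d::'a::field)"
proof -
  obtain i j where ij: "i < nr" "j < nc" "A $$ (i, j) \<noteq> 0"
    using assms(1,2) by (metis carrier_matD(1,2) eq_matI index_zero_mat(1,2,3))
  have "(c \<cdot>\<^sub>m A) $$ (i, j) = (d \<cdot>\<^sub>m A) $$ (i, j)" using assms(3) by simp
  then show ?thesis using ij assms(1) by simp
qed

lemma smult_smult_mat: "c \<cdot>\<^sub>m (d \<cdot>\<^sub>m A) = (c * d) \<cdot>\<^sub>m (A :: 'a::semiring_1 mat)"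
  by (rule eq_matI) (auto simp: mult.assoc)

lemma smult_mult_smult_mat:
  assumes "A \<in> carrier_mat nr n" and "B \<in> carrier_mat n nc"
  shows "(c \<cdot>\<^sub>m A) * (d \<cdot>\<^sub>m B) = (c * d) \<cdot>\<^sub>m (A * B :: 'a::comm_ring_1 mat)"
  using mult_smult_assoc_mat[OF assms(1) smult_carrier_mat[OF assms(2)]] mult_smult_distrib[OF assms]
  by (simp add: smult_smult_mat)

lemma smult_mat_factors_mult:
  assumes n: "0 < n" and W: "W1 \<in> carrier_mat n n" "W2 \<in> carrier_mat n n"
    and R: "R1 * R2 \<in> carrier (GL n)"
    and R1: "R1 = c1 \<cdot>\<^sub>m W1" and R2: "R2 = c2 \<cdot>\<^sub>m W2" and R12: "R1 * R2 = c \<cdot>\<^sub>m (W1 * W2)"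
  shows "c = c1 * (c2 :: 'a::field)"
proof (rule smult_mat_cancel)
  show W12: "W1 * W2 \<in> carrier_mat n n" using W by simp
  show "W1 * W2 \<noteq> 0\<^sub>m n n" using GL_neq_zero_mat[OF n R] R12 by auto
  show "c \<cdot>\<^sub>m (W1 * W2) = (c1 * c2) \<cdot>\<^sub>m (W1 * W2)"
    using R12 R1 R2 smult_mult_smult_mat[OF W] by simp
qed

lemma field_aut_semiring_hom: "field_aut s \<Longrightarrow> semiring_hom s"
proof
  assume s: "field_aut s"
  show "s (x + y) = s x + s y" "s (x * y) = s x * s y" "s 1 = 1" for x y
    using s by (simp_all add: field_aut_def)
  have "s 0 = s 0 + s 0" using s by (metis add.right_neutral field_aut_def)
  then show "s 0 = 0" by (metis add.right_neutral add_left_cancel)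
qed

lemma map_mat_GL:
  assumes s: "field_aut s" and M: "M \<in> carrier (GL n)"
  shows "map_mat s M \<in> carrier (GL n)"
proof -
  interpret s: semiring_hom s by (rule field_aut_semiring_hom[OF s])
  have Mc: "M \<in> carrier_mat n n" and Mi: "inv\<^bsub>GL n\<^esub> M \<in> carrier_mat n n"
    using M by (simp_all add: GL_carrier)
  have "map_mat s M * map_mat s (inv\<^bsub>GL n\<^esub> M) = map_mat s (M * inv\<^bsub>GL n\<^esub> M)"
    "map_mat s (inv\<^bsub>GL n\<^esub> M) * map_mat s M = map_mat s (inv\<^bsub>GL n\<^esub> M * M)"
    using s.mat_hom_mult[OF Mc Mi] s.mat_hom_mult[OF Mi Mc] by simp_all
  then have "map_mat s M * map_mat s (inv\<^bsub>GL n\<^esub> M) = 1\<^sub>m n"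
    "map_mat s (inv\<^bsub>GL n\<^esub> M) * map_mat s M = 1\<^sub>m n"
    using M by (simp_all add: s.mat_hom_one)
  then show ?thesis using Mc Mi
    by (auto simp: GL_carrier invertible_mat_def inverts_mat_def intro!: exI[of _ "map_mat s (inv\<^bsub>GL n\<^esub> M)"])
qed

lemma group_hom_mat_grp_image:
  assumes "group P" and "r \<in> hom P (GL n)" and "group (mat_grp n (r ` carrier P))"
  shows "group_hom P (mat_grp n (r ` carrier P)) r"
  using assms by (auto intro!: homI simp: hom_def group_hom_def group_hom_axioms_def)

lemma group_hom_mat_grp_GL:
  assumes "group (mat_grp n S)" and "e \<in> hom (mat_grp n S) (GL m)"
  shows "group_hom (mat_grp n S) (GL m) e"
  using assms GL_group by (simp add: group_hom_def group_hom_axioms_def)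

lemma quasisimple_rep_compose:
  assumes P: "group P" and r: "r \<in> hom P (GL n)" and q: "quasisimple (mat_grp n (r ` carrier P))"
    and e: "e \<in> hom (mat_grp n (r ` carrier P)) (GL m)"
  shows "group_hom P (GL m) (\<lambda>g. e (r g))"
    and "derived (GL m) ((\<lambda>g. e (r g)) ` carrier P) = (\<lambda>g. e (r g)) ` carrier P"
proof -
  have G: "group (mat_grp n (r ` carrier P))" using q by (simp add: quasisimple_def)
  show "group_hom P (GL m) (\<lambda>g. e (r g))"
    by (rule group_hom_compose[OF group_hom_mat_grp_image[OF P r G] group_hom_mat_grp_GL[OF G e]])
  show "derived (GL m) ((\<lambda>g. e (r g)) ` carrier P) = (\<lambda>g. e (r g)) ` carrier P"
    using quasisimple_image_perfect[OF group_hom_mat_grp_GL[OF G e] q] by (simp add: image_image)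
qed

lemma quasisimple_mat_grp_dim_pos:
  assumes q: "quasisimple (mat_grp n S)" and S: "S \<subseteq> carrier_mat n n"
  shows "0 < n"
proof (rule ccontr)
  assume "\<not> 0 < n"
  then have "M = M'" if "M \<in> S" "M' \<in> S" for M M'
  proof -
    have "M \<in> carrier_mat 0 0" "M' \<in> carrier_mat 0 0" using that S \<open>\<not> 0 < n\<close> by auto
    then show ?thesis by (intro eq_matI) auto
  qed
  then have "group_center (mat_grp n S) = carrier (mat_grp n S)" by (auto simp: group_center_def)
  moreover have "group (mat_grp n S)" using q by (simp add: quasisimple_def)
  ultimately show False using group.quasisimple_center_neq_carrier q by blast
qed

abbreviation center_coset :: "nat \<Rightarrow> 'a::field mat set \<Rightarrow> 'a mat \<Rightarrow> 'a mat set" where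
  "center_coset n S M \<equiv> group_center (mat_grp n S) #>\<^bsub>mat_grp n S\<^esub> M"

lemma proj_faithful_rcos_eq_imp_smult:
  assumes pf: "proj_faithful n S" and G: "group (mat_grp n S)" and S: "S \<subseteq> carrier (GL n)"
    and n: "0 < n" and M: "M \<in> S" and M': "M' \<in> S"
    and eq: "center_coset n S M = center_coset n S M'"
  shows "\<exists>d. d \<noteq> 0 \<and> M = d \<cdot>\<^sub>m M'"
proof -
  let ?Z = "group_center (mat_grp n S)"
  have "M \<in> ?Z #>\<^bsub>mat_grp n S\<^esub> M'"
    using group.rcos_self[OF G _ group.group_center_subgroup[OF G]] M eq by (metis mat_grp_carrier)
  then obtain z where z: "z \<in> ?Z" "M = z * M'" unfolding r_coset_def by auto
  then obtain d where d: "z = d \<cdot>\<^sub>m 1\<^sub>m n" using pf by (auto simp: proj_faithful_def group_center_def)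
  have "z \<in> carrier (GL n)" using z(1) S by (auto simp: group_center_def)
  moreover have "0 \<cdot>\<^sub>m 1\<^sub>m n = (0\<^sub>m n n :: 'a mat)" by (rule eq_matI) auto
  ultimately have "d \<noteq> 0" using GL_neq_zero_mat[OF n] d by auto
  moreover have "M' \<in> carrier_mat n n" using M' S by (auto simp: GL_carrier)
  then have "M = d \<cdot>\<^sub>m M'" using z(2) d by (simp add: mult_smult_assoc_mat[of _ n n _ n])
  ultimately show ?thesis by blast
qed

section \<open>Twisted representations\<close>

lemma continuous_map_discrete_binop:
  assumes "continuous_map T (discrete_topology UNIV) f"
    and "continuous_map T (discrete_topology UNIV) g"
  shows "continuous_map T (discrete_topology UNIV) (\<lambda>x. F (f x) (g x))"
proof -
  have "continuous_map T (discrete_topology UNIV) (\<lambda>x. (f x, g x))"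
    using continuous_map_pairedI[OF assms] by (simp flip: prod_topology_discrete_topology)
  from continuous_map_compose[OF this, of "discrete_topology UNIV" "case_prod F"]
  show ?thesis by (simp add: o_def)
qed

lemma projective_twist_character:
  fixes r b :: "'p \<Rightarrow> 'k::field mat"
  assumes P: "group P" and top: "topspace T = carrier P" and n: "0 < n" and A: "A \<in> carrier (GL n)"
    and r: "r \<in> hom P (GL n)" and cont_r: "continuous_map T (discrete_topology UNIV) r"
    and b: "\<forall>g\<in>carrier P. b g \<in> carrier_mat n n"
    and b_mult: "\<forall>g\<in>carrier P. \<forall>h\<in>carrier P. b (g \<otimes>\<^bsub>P\<^esub> h) = b g * b h"
    and cont_b: "continuous_map T (discrete_topology UNIV) b"
    and proj: "\<forall>g\<in>carrier P. \<exists>c. c \<noteq> 0 \<and> r g = c \<cdot>\<^sub>m (A * b g * inv\<^bsub>GL n\<^esub> A)"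
  shows "\<exists>\<chi>. cont_char P T \<chi> \<and>
           (\<forall>g\<in>carrier P. inv\<^bsub>GL n\<^esub> A * r g = (\<chi> g \<cdot>\<^sub>m b g) * inv\<^bsub>GL n\<^esub> A)"
proof -
  define B where "B = inv\<^bsub>GL n\<^esub> A"
  have Ac: "A \<in> carrier_mat n n" and Bc: "B \<in> carrier_mat n n" and BA: "B * A = 1\<^sub>m n"
    using A by (simp_all add: GL_carrier B_def)
  \<comment> \<open>\<open>\<chi> g\<close> depends on \<open>g\<close> only through \<open>(b g, r g)\<close>, which makes it continuous.\<close>
  define \<chi> where "\<chi> g = (SOME c. c \<noteq> 0 \<and> r g = c \<cdot>\<^sub>m (A * b g * B))" for g
  have \<chi>: "\<chi> g \<noteq> 0 \<and> r g = \<chi> g \<cdot>\<^sub>m (A * b g * B)" if "g \<in> carrier P" for g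
    unfolding \<chi>_def using proj that someI_ex[of "\<lambda>c. c \<noteq> 0 \<and> r g = c \<cdot>\<^sub>m (A * b g * B)"]
    by (simp add: B_def)
  have "\<chi> (g \<otimes>\<^bsub>P\<^esub> h) = \<chi> g * \<chi> h" if g: "g \<in> carrier P" and h: "h \<in> carrier P" for g h
  proof (rule smult_mat_factors_mult[OF n])
    have bg: "b g \<in> carrier_mat n n" and bh: "b h \<in> carrier_mat n n" using b g h by auto
    have gh: "g \<otimes>\<^bsub>P\<^esub> h \<in> carrier P" using g h P by (simp add: group.is_monoid monoid.m_closed)
    show "A * b g * B \<in> carrier_mat n n" "A * b h * B \<in> carrier_mat n n" using Ac Bc bg bh by auto
    show "r g * r h \<in> carrier (GL n)" using hom_mult[OF r g h] hom_in_carrier[OF r gh] by simp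
    show "r g = \<chi> g \<cdot>\<^sub>m (A * b g * B)" "r h = \<chi> h \<cdot>\<^sub>m (A * b h * B)" using \<chi> g h by auto
    have "(A * b g * B) * (A * b h * B) = A * b g * (B * A) * b h * B"
      using Ac Bc bg bh by (simp add: assoc_mult_mat[of _ n n _ n _ n])
    also have "\<dots> = A * b (g \<otimes>\<^bsub>P\<^esub> h) * B"
      using BA Ac Bc bg bh b_mult g h by (simp add: assoc_mult_mat[of _ n n _ n _ n])
    finally show "r g * r h = \<chi> (g \<otimes>\<^bsub>P\<^esub> h) \<cdot>\<^sub>m (A * b g * B * (A * b h * B))"
      using \<chi>[OF gh] hom_mult[OF r g h] by simp
  qed
  moreover have "continuous_map T (discrete_topology UNIV) \<chi>"
  proof -
    have "continuous_map T (discrete_topology UNIV)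
        (\<lambda>g. (\<lambda>M Y. SOME c. c \<noteq> 0 \<and> Y = c \<cdot>\<^sub>m (A * M * B)) (b g) (r g))"
      by (rule continuous_map_discrete_binop[OF cont_b cont_r])
    then show ?thesis unfolding \<chi>_def[abs_def] by simp
  qed
  ultimately have "cont_char P T \<chi>" using \<chi> by (simp add: cont_char_def)
  moreover have "B * r g = (\<chi> g \<cdot>\<^sub>m b g) * B" if g: "g \<in> carrier P" for g
  proof -
    have bg: "b g \<in> carrier_mat n n" using b g by auto
    have "B * (A * b g * B) = (B * A) * b g * B" using Ac Bc bg by (simp add: assoc_mult_mat[of _ n n _ n _ n])
    then have "B * (A * b g * B) = b g * B" using BA Bc bg by simp
    moreover have "B * r g = \<chi> g \<cdot>\<^sub>m (B * (A * b g * B))"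
      using \<chi>[OF g] mult_smult_distrib[OF Bc, of "A * b g * B" n] Ac Bc bg by simp
    ultimately show ?thesis using Bc bg by (simp add: mult_smult_assoc_mat[of _ n n _ n])
  qed
  ultimately show ?thesis unfolding B_def by blast
qed

text \<open>Here \<open>\<kappa>\<close> stands for the isomorphism of central quotients, read on representatives.\<close>

lemma twist_of_goursat_branch:
  fixes r1 r2 :: "'p \<Rightarrow> 'k::field mat" and F :: "'k mat \<Rightarrow> 'k mat"
  assumes top: "topological_group P T"
    and rep1: "cont_rep P T n r1" and rep2: "cont_rep P T n r2"
    and q2: "quasisimple (mat_grp n (r2 ` carrier P))" and pf: "proj_faithful n (r2 ` carrier P)"
    and A: "A \<in> carrier (GL n)"
    and F: "\<forall>g\<in>carrier P. F (r1 g) \<in> carrier_mat n n"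
    and F_mult: "\<forall>g\<in>carrier P. \<forall>h\<in>carrier P. F (r1 (g \<otimes>\<^bsub>P\<^esub> h)) = F (r1 g) * F (r1 h)"
    and compat: "\<forall>g\<in>carrier P. \<kappa> (r1 g) = center_coset n (r2 ` carrier P) (r2 g)"
    and branch: "\<forall>M\<in>r1 ` carrier P. \<exists>Y\<in>r2 ` carrier P. \<exists>c. c \<noteq> 0 \<and>
       \<kappa> M = center_coset n (r2 ` carrier P) Y \<and> Y = c \<cdot>\<^sub>m (A * F M * inv\<^bsub>GL n\<^esub> A)"
  shows "\<exists>\<chi>. cont_char P T \<chi> \<and>
           (\<forall>g\<in>carrier P. inv\<^bsub>GL n\<^esub> A * r2 g = (\<chi> g \<cdot>\<^sub>m F (r1 g)) * inv\<^bsub>GL n\<^esub> A)"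
proof (rule projective_twist_character)
  show "group P" and "topspace T = carrier P" using top by (simp_all add: topological_group_def)
  show r2: "r2 \<in> hom P (GL n)" and "continuous_map T (discrete_topology UNIV) r2"
    using rep2 by (simp_all add: cont_rep_def)
  show "A \<in> carrier (GL n)" by (rule A)
  show "\<forall>g\<in>carrier P. F (r1 g) \<in> carrier_mat n n"
    and "\<forall>g\<in>carrier P. \<forall>h\<in>carrier P. F (r1 (g \<otimes>\<^bsub>P\<^esub> h)) = F (r1 g) * F (r1 h)" by (fact F F_mult)+
  have "continuous_map T (discrete_topology UNIV) r1" using rep1 by (simp add: cont_rep_def)
  then show "continuous_map T (discrete_topology UNIV) (\<lambda>g. F (r1 g))"
    using continuous_map_compose[of T _ r1 "discrete_topology UNIV" F] by (simp add: o_def)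
  have S: "r2 ` carrier P \<subseteq> carrier (GL n)" using r2 by (auto simp: hom_def)
  then show n: "0 < n" using quasisimple_mat_grp_dim_pos[OF q2] by (auto simp: GL_carrier)
  have G2: "group (mat_grp n (r2 ` carrier P))" using q2 by (simp add: quasisimple_def)
  show "\<forall>g\<in>carrier P. \<exists>c. c \<noteq> 0 \<and> r2 g = c \<cdot>\<^sub>m (A * F (r1 g) * inv\<^bsub>GL n\<^esub> A)"
  proof
    fix g assume g: "g \<in> carrier P"
    obtain Y c where Y: "Y \<in> r2 ` carrier P" "c \<noteq> 0"
      "\<kappa> (r1 g) = center_coset n (r2 ` carrier P) Y"
      "Y = c \<cdot>\<^sub>m (A * F (r1 g) * inv\<^bsub>GL n\<^esub> A)"
      using branch g by blast
    have "center_coset n (r2 ` carrier P) (r2 g) = center_coset n (r2 ` carrier P) Y"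
      using compat g Y(3) by simp
    then obtain d where d: "d \<noteq> 0" "r2 g = d \<cdot>\<^sub>m Y"
      using proj_faithful_rcos_eq_imp_smult[OF pf G2 S n _ Y(1)] g by blast
    have "r2 g = (d * c) \<cdot>\<^sub>m (A * F (r1 g) * inv\<^bsub>GL n\<^esub> A)" using d(2) Y(4) by (simp add: smult_smult_mat)
    moreover have "d * c \<noteq> 0" using d(1) Y(2) by simp
    ultimately show "\<exists>c. c \<noteq> 0 \<and> r2 g = c \<cdot>\<^sub>m (A * F (r1 g) * inv\<^bsub>GL n\<^esub> A)" by blast
  qed
qed

lemma map_mat_rep_mult:
  assumes s: "field_aut s" and r: "r \<in> hom P (GL n)" and g: "g \<in> carrier P" and h: "h \<in> carrier P"
  shows "map_mat s (r (g \<otimes>\<^bsub>P\<^esub> h)) = map_mat s (r g) * map_mat s (r h)"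
proof -
  interpret s: semiring_hom s by (rule field_aut_semiring_hom[OF s])
  have "r g \<in> carrier_mat n n" "r h \<in> carrier_mat n n" using r g h by (auto simp: hom_def GL_carrier)
  then show ?thesis using s.mat_hom_mult hom_mult[OF r g h] by simp
qed

lemma semilinear_twist_of_goursat_branch:
  fixes r1 r2 :: "'p \<Rightarrow> 'k::field mat"
  assumes top: "topological_group P T"
    and rep1: "cont_rep P T n r1" and rep2: "cont_rep P T n r2"
    and q2: "quasisimple (mat_grp n (r2 ` carrier P))" and pf: "proj_faithful n (r2 ` carrier P)"
    and s: "field_aut s" and A: "A \<in> carrier (GL n)"
    and compat: "\<forall>g\<in>carrier P. \<kappa> (r1 g) = center_coset n (r2 ` carrier P) (r2 g)"
    and branch: "\<forall>M\<in>r1 ` carrier P. \<exists>Y\<in>r2 ` carrier P. \<exists>c. c \<noteq> 0 \<and>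
       \<kappa> M = center_coset n (r2 ` carrier P) Y \<and> Y = c \<cdot>\<^sub>m (A * map_mat s M * inv\<^bsub>GL n\<^esub> A)"
  shows "\<exists>\<chi> B. cont_char P T \<chi> \<and> B \<in> carrier (GL n) \<and>
           (\<forall>g\<in>carrier P. B * r2 g = (\<chi> g \<cdot>\<^sub>m map_mat s (r1 g)) * B)"
proof -
  have r1: "r1 \<in> hom P (GL n)" using rep1 by (simp add: cont_rep_def)
  have "\<exists>\<chi>. cont_char P T \<chi> \<and>
      (\<forall>g\<in>carrier P. inv\<^bsub>GL n\<^esub> A * r2 g = (\<chi> g \<cdot>\<^sub>m map_mat s (r1 g)) * inv\<^bsub>GL n\<^esub> A)"
    by (rule twist_of_goursat_branch[OF top rep1 rep2 q2 pf A _ _ compat branch])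
      (use r1 map_mat_rep_mult[OF s r1] in \<open>auto simp: hom_def GL_carrier\<close>)
  then show ?thesis using group.inv_closed[OF GL_group A] by blast
qed

lemma contragredient_twist_of_goursat_branch:
  fixes r1 r2 :: "'p \<Rightarrow> 'k::field mat"
  assumes top: "topological_group P T"
    and rep1: "cont_rep P T n r1" and rep2: "cont_rep P T n r2"
    and q2: "quasisimple (mat_grp n (r2 ` carrier P))" and pf: "proj_faithful n (r2 ` carrier P)"
    and s: "field_aut s" and A: "A \<in> carrier (GL n)"
    and compat: "\<forall>g\<in>carrier P. \<kappa> (r1 g) = center_coset n (r2 ` carrier P) (r2 g)"
    and branch: "\<forall>M\<in>r1 ` carrier P. \<exists>Y\<in>r2 ` carrier P. \<exists>c. c \<noteq> 0 \<and>
       \<kappa> M = center_coset n (r2 ` carrier P) Y \<and>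
       Y = c \<cdot>\<^sub>m (A * transpose_mat (inv\<^bsub>GL n\<^esub> (map_mat s M)) * inv\<^bsub>GL n\<^esub> A)"
  shows "\<exists>\<chi> B. cont_char P T \<chi> \<and> B \<in> carrier (GL n) \<and>
           (\<forall>g\<in>carrier P. B * r2 g = (\<chi> g \<cdot>\<^sub>m transpose_mat (inv\<^bsub>GL n\<^esub> (map_mat s (r1 g)))) * B)"
proof -
  have r1: "r1 \<in> hom P (GL n)" using rep1 by (simp add: cont_rep_def)
  define F where "F M = transpose_mat (inv\<^bsub>GL n\<^esub> (map_mat s M))" for M
  have sGL: "map_mat s (r1 g) \<in> carrier (GL n)" if "g \<in> carrier P" for g
    using map_mat_GL[OF s] r1 that by (simp add: hom_def Pi_iff)
  have "F (r1 (g \<otimes>\<^bsub>P\<^esub> h)) = F (r1 g) * F (r1 h)" if g: "g \<in> carrier P" and h: "h \<in> carrier P" for g h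
  proof -
    have "inv\<^bsub>GL n\<^esub> (map_mat s (r1 (g \<otimes>\<^bsub>P\<^esub> h)))
        = inv\<^bsub>GL n\<^esub> (map_mat s (r1 h)) * inv\<^bsub>GL n\<^esub> (map_mat s (r1 g))"
      using group.inv_mult_group[OF GL_group sGL[OF g] sGL[OF h]] map_mat_rep_mult[OF s r1 g h] by simp
    then show ?thesis
      unfolding F_def using transpose_mult GL_inv(3)[OF sGL[OF g]] GL_inv(3)[OF sGL[OF h]] by metis
  qed
  moreover have "\<forall>g\<in>carrier P. F (r1 g) \<in> carrier_mat n n" using sGL by (simp add: F_def)
  ultimately have "\<exists>\<chi>. cont_char P T \<chi> \<and>
      (\<forall>g\<in>carrier P. inv\<^bsub>GL n\<^esub> A * r2 g = (\<chi> g \<cdot>\<^sub>m F (r1 g)) * inv\<^bsub>GL n\<^esub> A)"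
    using twist_of_goursat_branch[OF top rep1 rep2 q2 pf A _ _ compat branch[folded F_def]] by blast
  then show ?thesis using group.inv_closed[OF GL_group A] unfolding F_def by blast
qed

lemma image_kernel_eq_image_of_untwisted:
  fixes P :: "'p monoid" and T :: "'p topology"
    and r1 r2 :: "'p \<Rightarrow> 'k::field mat" and e1 e2 :: "'k mat \<Rightarrow> 'f::field mat"
  assumes top: "topological_group P T"
    and rep1: "cont_rep P T n1 r1" and rep2: "cont_rep P T n2 r2"
    and e1: "e1 \<in> hom (mat_grp n1 (r1 ` carrier P)) (GL m1)"
    and e2: "e2 \<in> hom (mat_grp n2 (r2 ` carrier P)) (GL m2)"
    and q1: "quasisimple (mat_grp n1 (r1 ` carrier P))"
    and q2: "quasisimple (mat_grp n2 (r2 ` carrier P))"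
    and ga: "goursat_adapted n1 (r1 ` carrier P) n2 (r2 ` carrier P)"
    and nt: "\<not> (\<exists>\<chi> s A. cont_char P T \<chi> \<and> field_aut s \<and> n2 = n1 \<and> A \<in> carrier (GL n2) \<and>
              (\<forall>g\<in>carrier P. A * r2 g = (\<chi> g \<cdot>\<^sub>m map_mat s (r1 g)) * A))"
    and nd: "\<not> (\<exists>\<chi> s A. cont_char P T \<chi> \<and> field_aut s \<and> n2 = n1 \<and> A \<in> carrier (GL n2) \<and>
              (\<forall>g\<in>carrier P. A * r2 g =
                  (\<chi> g \<cdot>\<^sub>m transpose_mat (inv\<^bsub>GL n1\<^esub> (map_mat s (r1 g)))) * A))"
  shows "(\<lambda>g. e1 (r1 g)) ` kernel P (GL m2) (\<lambda>g. e2 (r2 g)) = (\<lambda>g. e1 (r1 g)) ` carrier P"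
proof (rule ccontr)
  let ?G1 = "mat_grp n1 (r1 ` carrier P)" and ?G2 = "mat_grp n2 (r2 ` carrier P)"
  assume ne: "(\<lambda>g. e1 (r1 g)) ` kernel P (GL m2) (\<lambda>g. e2 (r2 g)) \<noteq> (\<lambda>g. e1 (r1 g)) ` carrier P"
  have P: "group P" using top by (simp add: topological_group_def)
  have r1: "r1 \<in> hom P (GL n1)" and r2: "r2 \<in> hom P (GL n2)"
    using rep1 rep2 by (simp_all add: cont_rep_def)
  have G1: "group ?G1" and G2: "group ?G2" using q1 q2 by (simp_all add: quasisimple_def)
  obtain \<phi> where "\<phi> \<in> iso (?G1 Mod group_center ?G1) (?G2 Mod group_center ?G2)"
    and compat: "\<forall>g\<in>carrier P. \<phi> (center_coset n1 (r1 ` carrier P) (r1 g)) = center_coset n2 (r2 ` carrier P) (r2 g)"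
    using quasisimple_goursat_of_image_kernel_neq[OF group_hom_mat_grp_image[OF P r1 G1]
        group_hom_mat_grp_image[OF P r2 G2] _ _ q1 q2 group_hom_mat_grp_GL[OF G1 e1]
        group_hom_mat_grp_GL[OF G2 e2] ne]
    by auto
  then obtain s A where s: "field_aut s" and n12: "n1 = n2" and A: "A \<in> carrier (GL n2)"
    and branch: "(\<forall>M\<in>r1 ` carrier P. \<exists>Y\<in>r2 ` carrier P. \<exists>c. c \<noteq> 0 \<and>
               \<phi> (center_coset n1 (r1 ` carrier P) M) = center_coset n2 (r2 ` carrier P) Y
             \<and> Y = c \<cdot>\<^sub>m (A * map_mat s M * inv\<^bsub>GL n2\<^esub> A))
           \<or> (\<forall>M\<in>r1 ` carrier P. \<exists>Y\<in>r2 ` carrier P. \<exists>c. c \<noteq> 0 \<and>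
               \<phi> (center_coset n1 (r1 ` carrier P) M) = center_coset n2 (r2 ` carrier P) Y
             \<and> Y = c \<cdot>\<^sub>m (A * transpose_mat (inv\<^bsub>GL n1\<^esub> (map_mat s M)) * inv\<^bsub>GL n2\<^esub> A))"
    using ga unfolding goursat_adapted_def by blast
  have pf2: "proj_faithful n2 (r2 ` carrier P)" using ga by (simp add: goursat_adapted_def)
  have "\<not> (\<exists>\<chi> B. cont_char P T \<chi> \<and> B \<in> carrier (GL n2) \<and>
      (\<forall>g\<in>carrier P. B * r2 g = (\<chi> g \<cdot>\<^sub>m map_mat s (r1 g)) * B))"
    and "\<not> (\<exists>\<chi> B. cont_char P T \<chi> \<and> B \<in> carrier (GL n2) \<and>
      (\<forall>g\<in>carrier P. B * r2 g = (\<chi> g \<cdot>\<^sub>m transpose_mat (inv\<^bsub>GL n2\<^esub> (map_mat s (r1 g)))) * B))"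
    using nt nd s n12 by blast+
  with branch[unfolded n12] show False
    using semilinear_twist_of_goursat_branch[where \<kappa> = "\<lambda>M. \<phi> (center_coset n2 (r1 ` carrier P) M)",
        OF top rep1[unfolded n12] rep2 q2 pf2 s A compat[unfolded n12]]
      contragredient_twist_of_goursat_branch[where \<kappa> = "\<lambda>M. \<phi> (center_coset n2 (r1 ` carrier P) M)",
        OF top rep1[unfolded n12] rep2 q2 pf2 s A compat[unfolded n12]]
    by blast
qed

theorem proposition4p11:
  fixes P :: "'p monoid" and T :: "'p topology"
    and N :: nat and n :: "nat \<Rightarrow> nat" and m :: "nat \<Rightarrow> nat"
    and rho :: "nat \<Rightarrow> 'p \<Rightarrow> 'k::{finite,field} mat"
    and eta :: "nat \<Rightarrow> 'k mat \<Rightarrow> 'f::field mat"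
  assumes top: "topological_group P T"
    and reps: "\<forall>i<N. cont_rep P T (n i) (rho i)"
    and eta_hom: "\<forall>i<N. eta i \<in> hom (mat_grp (n i) (rho i ` carrier P)) (GL (m i))"
    and eta_nontriv: "\<forall>i<N. \<exists>M\<in>rho i ` carrier P. eta i M \<noteq> 1\<^sub>m (m i)"
    and quasi: "\<forall>i<N. quasisimple (mat_grp (n i) (rho i ` carrier P))"
    and goursat: "\<forall>i<N. \<forall>j<N. i \<noteq> j \<longrightarrow>
                    goursat_adapted (n i) (rho i ` carrier P) (n j) (rho j ` carrier P)"
    and no_twist: "\<forall>i<N. \<forall>j<N. i \<noteq> j \<longrightarrow>
       \<not> (\<exists>\<chi> s A. cont_char P T \<chi> \<and> field_aut s \<and> n i = n j \<and> A \<in> carrier (GL (n i)) \<and>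
              (\<forall>g\<in>carrier P. A * rho i g = (\<chi> g \<cdot>\<^sub>m map_mat s (rho j g)) * A))"
    and no_dual_twist: "\<forall>i<N. \<forall>j<N. i \<noteq> j \<longrightarrow>
       \<not> (\<exists>\<chi> s A. cont_char P T \<chi> \<and> field_aut s \<and> n i = n j \<and> A \<in> carrier (GL (n i)) \<and>
              (\<forall>g\<in>carrier P. A * rho i g =
                  (\<chi> g \<cdot>\<^sub>m transpose_mat (inv\<^bsub>GL (n j)\<^esub> (map_mat s (rho j g)))) * A))"
  shows "(\<lambda>g. \<lambda>i\<in>{..<N}. eta i (rho i g)) ` carrier P
           = (\<Pi>\<^sub>E i\<in>{..<N}. eta i ` rho i ` carrier P)"
proof -
  have P: "group P" using top by (simp add: topological_group_def)
  have f: "group_hom P (GL (m i)) (\<lambda>g. eta i (rho i g))"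
    and perfect: "derived (GL (m i)) ((\<lambda>g. eta i (rho i g)) ` carrier P) = (\<lambda>g. eta i (rho i g)) ` carrier P"
    if "i \<in> {..<N}" for i
    using quasisimple_rep_compose[OF P _ quasi[rule_format, of i] eta_hom[rule_format, of i]] reps that
    by (simp_all add: cont_rep_def)
  have pair: "(\<lambda>g. eta i (rho i g)) ` kernel P (GL (m j)) (\<lambda>g. eta j (rho j g))
      = (\<lambda>g. eta i (rho i g)) ` carrier P" if "i \<in> {..<N}" "j \<in> {..<N}" "i \<noteq> j" for i j
  proof -
    have i: "i < N" and j: "j < N" and ij: "i \<noteq> j" using that by simp_all
    show ?thesis
      by (rule image_kernel_eq_image_of_untwisted[OF top reps[rule_format, OF i] reps[rule_format, OF j]
          eta_hom[rule_format, OF i] eta_hom[rule_format, OF j] quasi[rule_format, OF i]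
          quasi[rule_format, OF j] goursat[rule_format, OF i j ij]
          no_twist[rule_format, OF j i ij[symmetric]] no_dual_twist[rule_format, OF j i ij[symmetric]]])
  qed
  have "(\<lambda>g. \<lambda>i\<in>{..<N}. eta i (rho i g)) ` carrier P
      = (\<Pi>\<^sub>E i\<in>{..<N}. (\<lambda>g. eta i (rho i g)) ` carrier P)"
    by (rule joint_image_eq_PiE[OF P finite_lessThan f perfect pair])
  then show ?thesis by (simp add: image_image)
qed

end
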